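(* Let $A$ be a commutative ring with unit, $X$ an alphabet, and $\star\in\mathcal{P}$. Then $(A\langle X\rangle,\star)$ is a commutative (and associative) $A$-algebra with unit $1_{X^*}$.
   Context: Conventions. $X^*$ is the free monoid on $X$, with empty word $1_{X^*}$. $A\langle X\rangle$ is the free $A$-module on $X^*$, with concatenation written by juxtaposition. $AX=\{\lambda x:\lambda\in A,\ x\in X\}$; note $0\in AX$. The class $\mathcal{P}$. $\mathcal{P}$ is the set of products $\star:A\langle X\rangle\times A\langle X\rangle\to A\langle X\rangle$ such that: (i) $\star$ is $A$-bilinear; (ii) $1_{X^*}\star w=w\star 1_{X^*}=w$ for all $w\in X^*$; (iii) for all $a,b\in X$ and $u,v\in X^*$, $au\star bv=a(u\star bv)+b(au\star v)+[a,b](u\star v)$. Here $[\cdot,\cdot]:X\times X\to AX$ is a map, extended to $AX\times AX$ by $[\lambda a,\mu b]=\lambda\mu[a,b]$, and it must satisfy $[a,b]=[b,a]$ and $[[a,b],c]=[a,[b,c]]$ for all $a,b,c\in X$. For $\lambda x\in AX$ and $P\in A\langle X\rangle$, $(\lambda x)P$ means $\lambda\, xP$. *)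

theory Defs
  imports "HOL-Library.Poly_Mapping"
begin

text \<open>A<X> = free A-module on the words X^*, modelled as finitely supported
  functions  'x list to 'a.  The word w is  Poly_Mapping.single w 1.\<close>

type_synonym ('x, 'a) ncpoly = "'x list \<Rightarrow>\<^sub>0 'a"

lift_definition smul :: "'a::comm_ring_1 \<Rightarrow> ('x, 'a) ncpoly \<Rightarrow> ('x, 'a) ncpoly"
  is "\<lambda>c p w. c * p w"
  by (erule rev_finite_subset) auto

text \<open>Left concatenation by a letter:  x P  (linear extension of w \<mapsto> x w).\<close>
lift_definition lmul :: "'x \<Rightarrow> ('x, 'a::comm_ring_1) ncpoly \<Rightarrow> ('x, 'a) ncpoly"
  is "\<lambda>x p w. case w of [] \<Rightarrow> 0 | y # v \<Rightarrow> (if y = x then p v else 0)"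
proof -
  fix x :: 'x and p :: "'x list \<Rightarrow> 'a"
  assume f: "finite {w. p w \<noteq> 0}"
  have "{w. (case w of [] \<Rightarrow> 0 | y # v \<Rightarrow> (if y = x then p v else 0)) \<noteq> 0}
        \<subseteq> (\<lambda>v. x # v) ` {w. p w \<noteq> 0}"
    by (auto simp: neq_Nil_conv split: list.splits if_splits)
  then show "finite {w. (case w of [] \<Rightarrow> 0 | y # v \<Rightarrow> (if y = x then p v else 0)) \<noteq> 0}"
    using f by (meson finite_imageI rev_finite_subset)
qed

abbreviation word :: "'x list \<Rightarrow> ('x, 'a::comm_ring_1) ncpoly"
  where "word w \<equiv> Poly_Mapping.single w 1"

text \<open>A bracket  [.,.] : X \<times> X \<rightarrow> AX  is given as a pair (coefficient, letter):
  br a b = (\<lambda>, c) stands for \<lambda>c \<in> AX.  Its image in A<X> is:\<close>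
definition AX_elem :: "'a::comm_ring_1 \<times> 'x \<Rightarrow> ('x, 'a) ncpoly"
  where "AX_elem lc = Poly_Mapping.single [snd lc] (fst lc)"

text \<open>Admissible brackets: symmetric and associative (with the bilinear
  extension [\<lambda>a,\<mu>b] = \<lambda>\<mu>[a,b]), equalities taken in AX \<subseteq> A<X>.\<close>
definition admissible_bracket :: "('x \<Rightarrow> 'x \<Rightarrow> 'a::comm_ring_1 \<times> 'x) \<Rightarrow> bool"
  where "admissible_bracket br \<longleftrightarrow>
     (\<forall>a b. AX_elem (br a b) = AX_elem (br b a)) \<and>
     (\<forall>a b c.
        AX_elem (fst (br a b) * fst (br (snd (br a b)) c), snd (br (snd (br a b)) c))
      = AX_elem (fst (br b c) * fst (br a (snd (br b c))), snd (br a (snd (br b c)))))"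

definition bilinear_prod :: "(('x, 'a::comm_ring_1) ncpoly \<Rightarrow> ('x, 'a) ncpoly \<Rightarrow> ('x, 'a) ncpoly) \<Rightarrow> bool"
  where "bilinear_prod st \<longleftrightarrow>
     (\<forall>p q r. st (p + q) r = st p r + st q r) \<and>
     (\<forall>p q r. st p (q + r) = st p q + st p r) \<and>
     (\<forall>c p q. st (smul c p) q = smul c (st p q)) \<and>
     (\<forall>c p q. st p (smul c q) = smul c (st p q))"

definition class_P :: "(('x, 'a::comm_ring_1) ncpoly \<Rightarrow> ('x, 'a) ncpoly \<Rightarrow> ('x, 'a) ncpoly) set"
  where "class_P = {st. bilinear_prod st \<and>
     (\<forall>w. st (word []) (word w) = word w \<and> st (word w) (word []) = word w) \<and>
     (\<exists>br. admissible_bracket br \<and>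
        (\<forall>a b u v. st (word (a # u)) (word (b # v)) =
            lmul a (st (word u) (word (b # v)))
          + lmul b (st (word (a # u)) (word v))
          + smul (fst (br a b)) (lmul (snd (br a b)) (st (word u) (word v)))))}"

end

theory Submission
  imports Defs
begin

(* The product \<star> of a class-P structure is pinned down by its values on words:
   it is bilinear, has the empty word as two-sided unit on words, and on two
   nonempty words it obeys the recursion
     au \<star> bv = a(u \<star> bv) + b(au \<star> v) + [a,b](u \<star> v).
   All three algebra laws are therefore proved in two stages.  First, on words,
   by strong induction on the total length: commutativity uses the symmetry of
   the bracket, associativity expands both sides of (au \<star> bv) \<star> cw twice by the
   recursion and matches the resulting terms using the induction hypothesis
   and the associativity of the bracket.  Second, a linear extension principle
   (two A-linear maps agreeing on all words agree everywhere) lifts each law to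
   arbitrary polynomials, one argument at a time. *)

section \<open>The module A<X>\<close>

lemma lookup_smul: "Poly_Mapping.lookup (smul c p) w = c * Poly_Mapping.lookup p w"
  by (simp add: smul.rep_eq)

lemma lookup_lmul:
  "Poly_Mapping.lookup (lmul x p) w =
     (case w of [] \<Rightarrow> 0 | y # v \<Rightarrow> (if y = x then Poly_Mapping.lookup p v else 0))"
  by (simp add: lmul.rep_eq)

lemma smul_add: "smul c (p + q) = smul c p + smul c q"
  by (rule poly_mapping_eqI) (simp add: lookup_smul lookup_add distrib_left)

lemma smul_smul: "smul c (smul d p) = smul (c * d) p"
  by (rule poly_mapping_eqI) (simp add: lookup_smul mult.assoc)

lemma smul_zero_left: "smul 0 p = 0"
  by (rule poly_mapping_eqI) (simp add: lookup_smul)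

lemma lmul_add: "lmul x (p + q) = lmul x p + lmul x q"
  by (rule poly_mapping_eqI) (simp add: lookup_lmul lookup_add split: list.splits)

lemma lmul_smul: "lmul x (smul c p) = smul c (lmul x p)"
  by (rule poly_mapping_eqI) (simp add: lookup_lmul lookup_smul split: list.splits)

lemma lmul_word: "lmul x (word u) = word (x # u)"
  by (rule poly_mapping_eqI) (auto simp: lookup_lmul lookup_single when_def split: list.splits)

lemma word_expansion:
  "p = (\<Sum>w\<in>Poly_Mapping.keys p. smul (Poly_Mapping.lookup p w) (word w))"
proof -
  have lookup_partial_sum:
    "Poly_Mapping.lookup (\<Sum>w\<in>I. smul (Poly_Mapping.lookup p w) (word w)) v =
       (if v \<in> I then Poly_Mapping.lookup p v else 0)" if "finite I" for I v
    using that
    by (induction I rule: finite_induct) (auto simp: lookup_single lookup_add lookup_smul when_def)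
  show ?thesis
    by (rule poly_mapping_eqI) (fastforce simp: Poly_Mapping.in_keys_iff lookup_partial_sum)
qed

text \<open>Linear extension principle: two A-linear maps on A<X> that agree on every
  word agree everywhere.  This reduces each algebra law to the case of words.\<close>

lemma linear_maps_agree_on_words:
  fixes F G :: "('x, 'a::comm_ring_1) ncpoly \<Rightarrow> ('y, 'a) ncpoly"
  assumes F_add: "\<And>p q. F (p + q) = F p + F q" and G_add: "\<And>p q. G (p + q) = G p + G q"
    and F_smul: "\<And>c p. F (smul c p) = smul c (F p)"
    and G_smul: "\<And>c p. G (smul c p) = smul c (G p)"
    and on_words: "\<And>w. F (word w) = G (word w)"
  shows "F p = G p"
proof -
  have F_zero: "F 0 = 0" and G_zero: "G 0 = 0"
    using F_add[of 0 0] G_add[of 0 0] by simp_all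
  have agree_on_sums:
    "F (\<Sum>w\<in>I. smul (Poly_Mapping.lookup p w) (word w)) =
     G (\<Sum>w\<in>I. smul (Poly_Mapping.lookup p w) (word w))" if "finite I" for I
    using that by (induction I rule: finite_induct) (simp_all add: F_zero G_zero assms)
  show ?thesis
    by (subst (1 2) word_expansion) (simp add: agree_on_sums)
qed

text \<open>Equal elements of AX act identically as left multipliers: either both
  coefficients vanish, or coefficient and letter coincide.\<close>

lemma AX_elem_eq_imp_same_action:
  assumes "AX_elem (c, x) = AX_elem (c', x')"
  shows "smul c (lmul x p) = smul c' (lmul x' p)"
proof (cases "c = 0")
  case True
  then have "Poly_Mapping.single [x'] c' = 0"
    using assms by (simp add: AX_elem_def)
  then have "c' = 0"
    by (metis Poly_Mapping.lookup_single_eq Poly_Mapping.lookup_zero)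
  with True show ?thesis
    by (simp add: smul_zero_left)
next
  case False
  have "Poly_Mapping.lookup (Poly_Mapping.single [x] c) [x] =
        Poly_Mapping.lookup (Poly_Mapping.single [x'] c') [x]"
    using assms by (simp add: AX_elem_def)
  with False have "x' = x \<and> c' = c"
    by (auto simp: lookup_single when_def split: if_splits)
  then show ?thesis
    by simp
qed

section \<open>Products in the class P\<close>

locale class_P_product =
  fixes star :: "('x, 'a::comm_ring_1) ncpoly \<Rightarrow> ('x, 'a) ncpoly \<Rightarrow> ('x, 'a) ncpoly"
      (infixl "\<star>" 70)
    and br :: "'x \<Rightarrow> 'x \<Rightarrow> 'a \<times> 'x"
  assumes bilinear: "bilinear_prod (\<star>)"
    and unit_on_words: "\<forall>w. word [] \<star> word w = word w \<and> word w \<star> word [] = word w"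
    and bracket: "admissible_bracket br"
    and recursion_on_words: "\<forall>a b u v. word (a # u) \<star> word (b # v) =
            lmul a (word u \<star> word (b # v))
          + lmul b (word (a # u) \<star> word v)
          + smul (fst (br a b)) (lmul (snd (br a b)) (word u \<star> word v))"
begin

abbreviation bmul :: "'x \<Rightarrow> 'x \<Rightarrow> ('x, 'a) ncpoly \<Rightarrow> ('x, 'a) ncpoly"
  where "bmul a b p \<equiv> smul (fst (br a b)) (lmul (snd (br a b)) p)"

lemma star_add_left: "(p + q) \<star> r = p \<star> r + q \<star> r"
  and star_add_right: "p \<star> (q + r) = p \<star> q + p \<star> r"
  and star_smul_left: "smul c p \<star> q = smul c (p \<star> q)"
  and star_smul_right: "p \<star> smul c q = smul c (p \<star> q)"
  using bilinear by (simp_all add: bilinear_prod_def)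

lemmas linearity =
  star_add_left star_add_right star_smul_left star_smul_right
  smul_add smul_smul lmul_add lmul_smul

lemma unit_left: "word [] \<star> p = p"
  by (rule linear_maps_agree_on_words[where F = "(\<star>) (word [])" and G = "\<lambda>p. p"])
     (simp_all add: linearity unit_on_words)

lemma unit_right: "p \<star> word [] = p"
  by (rule linear_maps_agree_on_words[where F = "\<lambda>p. p \<star> word []" and G = "\<lambda>p. p"])
     (simp_all add: linearity unit_on_words)

lemma recursion_word_left:
  "lmul a (word u) \<star> lmul b q =
     lmul a (word u \<star> lmul b q) + lmul b (lmul a (word u) \<star> q) + bmul a b (word u \<star> q)"
  by (rule linear_maps_agree_on_words[where F = "\<lambda>q. lmul a (word u) \<star> lmul b q"])
     (simp_all add: linearity lmul_word recursion_on_words ac_simps)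

lemma recursion:
  "lmul a p \<star> lmul b q =
     lmul a (p \<star> lmul b q) + lmul b (lmul a p \<star> q) + bmul a b (p \<star> q)"
  by (rule linear_maps_agree_on_words[where F = "\<lambda>p. lmul a p \<star> lmul b q"])
     (simp_all add: linearity recursion_word_left ac_simps)

text \<open>The two bracket axioms, read as identities of left multipliers:
  [a,b] = [b,a] and [[a,b],c] = [a,[b,c]].\<close>

lemma bracket_commute: "bmul a b p = bmul b a p"
  using bracket AX_elem_eq_imp_same_action unfolding admissible_bracket_def
  by (metis prod.collapse)

lemma bracket_assoc:
  "smul (fst (br a b)) (bmul (snd (br a b)) c p) = smul (fst (br b c)) (bmul a (snd (br b c)) p)"
  using bracket AX_elem_eq_imp_same_action unfolding admissible_bracket_def
  unfolding smul_smul by metis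

section \<open>Commutativity\<close>

lemma commute_on_words: "word u \<star> word v = word v \<star> word u"
proof (induction "length u + length v" arbitrary: u v rule: less_induct)
  case less
  show ?case
  proof (cases "u = [] \<or> v = []")
    case True
    then show ?thesis
      using unit_on_words by auto
  next
    case False
    then obtain a u' b v' where uv: "u = a # u'" "v = b # v'"
      by (meson neq_Nil_conv)
    have "word u \<star> word v =
          lmul a (word u' \<star> word v) + lmul b (word u \<star> word v') + bmul a b (word u' \<star> word v')"
      using recursion_on_words uv by simp
    also have "\<dots> =
          lmul a (word v \<star> word u') + lmul b (word v' \<star> word u) + bmul b a (word v' \<star> word u')"
      using less uv bracket_commute by simp
    also have "\<dots> = word v \<star> word u"
      using recursion_on_words uv by (simp add: ac_simps)
    finally show ?thesis .
  qed
qed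

lemma commute: "p \<star> q = q \<star> p"
proof -
  have word_commutes: "word w \<star> q = q \<star> word w" for w
    by (rule linear_maps_agree_on_words[where F = "\<lambda>q. word w \<star> q" and G = "\<lambda>q. q \<star> word w"])
       (simp_all add: linearity commute_on_words)
  show ?thesis
    by (rule linear_maps_agree_on_words[where F = "\<lambda>p. p \<star> q" and G = "\<lambda>p. q \<star> p"])
       (simp_all add: linearity word_commutes)
qed

section \<open>Associativity\<close>

text \<open>The inductive step: associativity for (aU, bV, cW) follows from
  associativity for the seven triples obtained by stripping some nonempty
  subset of the three leading letters, together with associativity of the
  bracket.\<close>

lemma assoc_step:
  assumes "(U \<star> lmul b V) \<star> lmul c W = U \<star> (lmul b V \<star> lmul c W)"
    and "(lmul a U \<star> V) \<star> lmul c W = lmul a U \<star> (V \<star> lmul c W)"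
    and "(lmul a U \<star> lmul b V) \<star> W = lmul a U \<star> (lmul b V \<star> W)"
    and "(U \<star> V) \<star> lmul c W = U \<star> (V \<star> lmul c W)"
    and "(U \<star> lmul b V) \<star> W = U \<star> (lmul b V \<star> W)"
    and "(lmul a U \<star> V) \<star> W = lmul a U \<star> (V \<star> W)"
    and "(U \<star> V) \<star> W = U \<star> (V \<star> W)"
  shows "(lmul a U \<star> lmul b V) \<star> lmul c W = lmul a U \<star> (lmul b V \<star> lmul c W)"
  by (simp only: recursion linearity assms(1,2,4-7) assms(3)[symmetric]
      bracket_assoc[simplified smul_smul])
     (simp add: add_ac)

lemma assoc_on_words: "(word u \<star> word v) \<star> word w = word u \<star> (word v \<star> word w)"
proof (induction "length u + length v + length w" arbitrary: u v w rule: less_induct)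
  case less
  show ?case
  proof (cases "u = [] \<or> v = [] \<or> w = []")
    case True
    then show ?thesis
      by (auto simp: unit_left unit_right)
  next
    case False
    then obtain a u' b v' c w' where uvw: "u = a # u'" "v = b # v'" "w = c # w'"
      by (meson neq_Nil_conv)
    have IH: "(word u'' \<star> word v'') \<star> word w'' = word u'' \<star> (word v'' \<star> word w'')"
      if "length u'' + length v'' + length w'' < length u + length v + length w"
      for u'' v'' w''
      using less that by blast
    have "(lmul a (word u') \<star> lmul b (word v')) \<star> lmul c (word w') =
          lmul a (word u') \<star> (lmul b (word v') \<star> lmul c (word w'))"
      by (rule assoc_step; (simp only: lmul_word)?; rule IH; simp add: uvw)
    then show ?thesis
      by (simp only: uvw lmul_word)
  qed
qed

lemma assoc: "(p \<star> q) \<star> r = p \<star> (q \<star> r)"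
proof -
  have assoc_two_words: "(p \<star> word v) \<star> word w = p \<star> (word v \<star> word w)" for p v w
    by (rule linear_maps_agree_on_words[where F = "\<lambda>p. (p \<star> word v) \<star> word w"])
       (simp_all add: linearity assoc_on_words)
  have assoc_one_word: "(p \<star> q) \<star> word w = p \<star> (q \<star> word w)" for q w
    by (rule linear_maps_agree_on_words[where F = "\<lambda>q. (p \<star> q) \<star> word w"])
       (simp_all add: linearity assoc_two_words)
  show ?thesis
    by (rule linear_maps_agree_on_words[where F = "\<lambda>r. (p \<star> q) \<star> r"])
       (simp_all add: linearity assoc_one_word)
qed

end

theorem mainTheorem2:
  fixes st :: "('x, 'a::comm_ring_1) ncpoly \<Rightarrow> ('x, 'a) ncpoly \<Rightarrow> ('x, 'a) ncpoly"
  assumes "st \<in> class_P"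
  shows "bilinear_prod st
       \<and> (\<forall>p. st (word []) p = p \<and> st p (word []) = p)
       \<and> (\<forall>p q. st p q = st q p)
       \<and> (\<forall>p q r. st (st p q) r = st p (st q r))"
proof -
  from assms obtain br where "class_P_product st br"
    unfolding class_P_def class_P_product_def by blast
  then interpret class_P_product st br .
  show ?thesis
    using bilinear unit_left unit_right commute assoc by blast
qed

end
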